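(* For every $\varepsilon>0$ there exist a present-bias parameter $b>1$ and an instance $G$ for which $R_i\ge(2-\varepsilon)R_d$; i.e., the ratio between the minimum total internal reward $R_i$ and the minimum reward $R_d$ achievable with edge deletion can be as high as $2-\varepsilon$.
   Context: An instance is a finite directed acyclic graph $G=(V,E)$ with nonnegative edge costs $c(u,v)$, start node $s$ and target node $t$, where $t$ has no outgoing edges. Reward at $t$ with edge deletion: in a subgraph $H$ of $G$, with reward $R$ at $t$, process nodes in reverse topological order; $t$ is never abandoned and $C_R(t)=0$; for $u\ne t$, among out-edges $(u,v)$ of $H$ with $v$ not abandoned let $P(u,v)=b\,c(u,v)+C_R(v)$; if none exists or all have $P(u,v)>R$, $u$ is abandoned; otherwise the agent moves to $v^*(u)\in\arg\min P(u,v)$ and $C_R(u)=c(u,v^*(u))+C_R(v^*(u))$; the agent reaches $t$ iff $s$ is not abandoned. $R_d$ is the minimum $R$ such that for some subgraph $H$ of $G$ the agent reaches $t$ in $H$ with reward $R$ at $t$. Internal rewards: nonnegative rewards $r(u,v)$ are placed on the edges of $G$ (a reward at $t$ is equivalent to reward on edges entering $t$); the reward on an edge is collected after traversing it and is not multiplied by $b$. Process nodes in reverse topological order; $t$ is not abandoned and $N(t)=0$; for $u\ne t$, among out-edges $(u,v)$ with $v$ not abandoned let $\pi(u,v)=b\,c(u,v)-r(u,v)+N(v)$; if none exists or all have $\pi(u,v)>0$, $u$ is abandoned; otherwise the agent moves to $v^*(u)\in\arg\min\pi(u,v)$ and $N(u)=c(u,v^*(u))-r(u,v^*(u))+N(v^*(u))$.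 $R_i$ is the minimum total $\sum_{e\in E} r(e)$ of internal rewards for which $s$ is not abandoned. *)

theory Defs
  imports Main "HOL.Real"
begin

definition dag_instance :: "nat set \<Rightarrow> (nat \<times> nat) set \<Rightarrow> (nat \<times> nat \<Rightarrow> real) \<Rightarrow> nat \<Rightarrow> nat \<Rightarrow> bool" where
  "dag_instance V E c s t \<longleftrightarrow> finite V \<and> E \<subseteq> V \<times> V \<and> acyclic E \<and> s \<in> V \<and> t \<in> V
     \<and> (\<forall>v. (t, v) \<notin> E) \<and> (\<forall>e\<in>E. 0 \<le> c e)"

text \<open>A labelling (abandoned set ab, chosen successor nxt, perceived cost C) that is
  consistent with the reverse-topological process for reward R at t in the subgraph
  with edge set H.  Since the graph is acyclic, such labellings are exactly the
  outcomes of the process (for the various argmin choices).\<close>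
definition valid_eval_d ::
  "nat set \<Rightarrow> (nat \<times> nat) set \<Rightarrow> (nat \<times> nat \<Rightarrow> real) \<Rightarrow> nat \<Rightarrow> real \<Rightarrow> real
   \<Rightarrow> (nat \<Rightarrow> bool) \<Rightarrow> (nat \<Rightarrow> nat) \<Rightarrow> (nat \<Rightarrow> real) \<Rightarrow> bool" where
  "valid_eval_d V H c t b R ab nxt C \<longleftrightarrow>
     \<not> ab t \<and> C t = 0 \<and>
     (\<forall>u\<in>V. u \<noteq> t \<longrightarrow>
        (let A = {v. (u, v) \<in> H \<and> \<not> ab v};
             P = (\<lambda>v. b * c (u, v) + C v)
         in (ab u \<longleftrightarrow> (A = {} \<or> (\<forall>v\<in>A. P v > R))) \<and>
            (\<not> ab u \<longrightarrow> nxt u \<in> A \<and> (\<forall>v\<in>A. P (nxt u) \<le> P v)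
                        \<and> C u = c (u, nxt u) + C (nxt u))))"

definition reaches_d ::
  "nat set \<Rightarrow> (nat \<times> nat) set \<Rightarrow> (nat \<times> nat \<Rightarrow> real) \<Rightarrow> nat \<Rightarrow> nat \<Rightarrow> real \<Rightarrow> real \<Rightarrow> bool" where
  "reaches_d V H c s t b R \<longleftrightarrow> (\<exists>ab nxt C. valid_eval_d V H c t b R ab nxt C \<and> \<not> ab s)"

definition feasible_d ::
  "nat set \<Rightarrow> (nat \<times> nat) set \<Rightarrow> (nat \<times> nat \<Rightarrow> real) \<Rightarrow> nat \<Rightarrow> nat \<Rightarrow> real \<Rightarrow> real set" where
  "feasible_d V E c s t b = {R. 0 \<le> R \<and> (\<exists>H \<subseteq> E. reaches_d V H c s t b R)}"

definition valid_eval_i ::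
  "nat set \<Rightarrow> (nat \<times> nat) set \<Rightarrow> (nat \<times> nat \<Rightarrow> real) \<Rightarrow> nat \<Rightarrow> real \<Rightarrow> (nat \<times> nat \<Rightarrow> real)
   \<Rightarrow> (nat \<Rightarrow> bool) \<Rightarrow> (nat \<Rightarrow> nat) \<Rightarrow> (nat \<Rightarrow> real) \<Rightarrow> bool" where
  "valid_eval_i V E c t b r ab nxt N \<longleftrightarrow>
     \<not> ab t \<and> N t = 0 \<and>
     (\<forall>u\<in>V. u \<noteq> t \<longrightarrow>
        (let A = {v. (u, v) \<in> E \<and> \<not> ab v};
             \<pi> = (\<lambda>v. b * c (u, v) - r (u, v) + N v)
         in (ab u \<longleftrightarrow> (A = {} \<or> (\<forall>v\<in>A. \<pi> v > 0))) \<and>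
            (\<not> ab u \<longrightarrow> nxt u \<in> A \<and> (\<forall>v\<in>A. \<pi> (nxt u) \<le> \<pi> v)
                        \<and> N u = c (u, nxt u) - r (u, nxt u) + N (nxt u))))"

definition reaches_i ::
  "nat set \<Rightarrow> (nat \<times> nat) set \<Rightarrow> (nat \<times> nat \<Rightarrow> real) \<Rightarrow> nat \<Rightarrow> nat \<Rightarrow> real \<Rightarrow> (nat \<times> nat \<Rightarrow> real) \<Rightarrow> bool" where
  "reaches_i V E c s t b r \<longleftrightarrow> (\<exists>ab nxt N. valid_eval_i V E c t b r ab nxt N \<and> \<not> ab s)"

definition feasible_i ::
  "nat set \<Rightarrow> (nat \<times> nat) set \<Rightarrow> (nat \<times> nat \<Rightarrow> real) \<Rightarrow> nat \<Rightarrow> nat \<Rightarrow> real \<Rightarrow> real set" where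
  "feasible_i V E c s t b =
     {(\<Sum>e\<in>E. r e) | r. (\<forall>e\<in>E. 0 \<le> r e) \<and> reaches_i V E c s t b r}"

definition is_min :: "real set \<Rightarrow> real \<Rightarrow> bool" where
  "is_min S x \<longleftrightarrow> x \<in> S \<and> (\<forall>y\<in>S. x \<le> y)"

end

theory Submission
  imports Defs
begin

(* Take present bias b = k^2 and a path s -> w_0 -> ... -> w_k -> t in which consecutive hubs
   are joined both by a shortcut of cost (k-1)/k and by a chain of k^2 edges (a free first edge,
   then k^2 - 1 edges of cost 1/(k+1), together k - 1); s -> w_0 costs (k-1)/k and w_k -> t
   costs 1.

   With edge deletion, keeping only the shortcuts bounds the perceived cost at every node by
   k^2, while the last edge alone is perceived at cost b, so R_d = k^2.

   With internal rewards nothing is deleted. The first edge of a chain looks free and a chain,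
   once entered, is cheap enough to be followed to its end, so at every hub the shortcut is
   taken only if it carries a reward of at least (k-1)^2. Backward induction over the hubs
   shows that either the rewards beyond a hub already sum to k^2 + (k-1)^2, or they cover the
   full cost of walking all remaining chains; in the second case the reward forced on
   s -> w_0 brings the total to k^2 + (k-1)^2 as well. This total is attained, so
   R_i / R_d = 2 - 2/k + 1/k^2. *)

lemma acyclic_if_increasing:
  assumes "E \<subseteq> {(u, v). (u::nat) < v}"
  shows "acyclic E"
proof -
  have "(x, y) \<in> E\<^sup>+ \<Longrightarrow> x < y" for x y
    by (induction rule: trancl_induct) (use assms in auto)
  then show ?thesis
    unfolding acyclic_def by blast
qed

lemma valid_eval_d_step:
  assumes "valid_eval_d V H c t b R ab nxt C" "u \<in> V" "u \<noteq> t" "\<not> ab u"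
  shows "(u, nxt u) \<in> H" "\<not> ab (nxt u)" "b * c (u, nxt u) + C (nxt u) \<le> R"
proof -
  let ?A = "{v. (u, v) \<in> H \<and> \<not> ab v}"
  let ?P = "\<lambda>v. b * c (u, v) + C v"
  have h: "(ab u \<longleftrightarrow> (?A = {} \<or> (\<forall>v\<in>?A. ?P v > R))) \<and>
            (\<not> ab u \<longrightarrow> nxt u \<in> ?A \<and> (\<forall>v\<in>?A. ?P (nxt u) \<le> ?P v))"
    using assms unfolding valid_eval_d_def Let_def by blast
  then obtain v where "v \<in> ?A" "?P v \<le> R"
    using assms(4) by force
  with h assms(4) have "nxt u \<in> ?A" "?P (nxt u) \<le> ?P v"
    by auto
  then show "(u, nxt u) \<in> H" "\<not> ab (nxt u)" "?P (nxt u) \<le> R"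
    using \<open>?P v \<le> R\<close> by auto
qed

lemma valid_eval_i_step:
  assumes "valid_eval_i V E c t b r ab nxt N" "u \<in> V" "u \<noteq> t" "\<not> ab u"
  shows "(u, nxt u) \<in> E" "\<not> ab (nxt u)"
    and "b * c (u, nxt u) - r (u, nxt u) + N (nxt u) \<le> 0"
    and "N u = c (u, nxt u) - r (u, nxt u) + N (nxt u)"
    and "\<And>v. (u, v) \<in> E \<Longrightarrow> \<not> ab v \<Longrightarrow>
           b * c (u, nxt u) - r (u, nxt u) + N (nxt u) \<le> b * c (u, v) - r (u, v) + N v"
proof -
  let ?A = "{v. (u, v) \<in> E \<and> \<not> ab v}"
  let ?P = "\<lambda>v. b * c (u, v) - r (u, v) + N v"
  have h: "(ab u \<longleftrightarrow> (?A = {} \<or> (\<forall>v\<in>?A. ?P v > 0))) \<and>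
            (\<not> ab u \<longrightarrow> nxt u \<in> ?A \<and> (\<forall>v\<in>?A. ?P (nxt u) \<le> ?P v)
               \<and> N u = c (u, nxt u) - r (u, nxt u) + N (nxt u))"
    using assms unfolding valid_eval_i_def Let_def by blast
  then obtain v where "v \<in> ?A" "?P v \<le> 0"
    using assms(4) by force
  with h assms(4) have "nxt u \<in> ?A" "?P (nxt u) \<le> ?P v"
    by auto
  then show "(u, nxt u) \<in> E" "\<not> ab (nxt u)" "?P (nxt u) \<le> 0"
    using \<open>?P v \<le> 0\<close> by auto
  show "N u = c (u, nxt u) - r (u, nxt u) + N (nxt u)"
    "\<And>v. (u, v) \<in> E \<Longrightarrow> \<not> ab v \<Longrightarrow> ?P (nxt u) \<le> ?P v"
    using h assms(4) by auto
qed

lemma valid_eval_i_not_abandoned: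
  assumes "valid_eval_i V E c t b r ab nxt N" "u \<in> V" "u \<noteq> t"
    and "(u, v) \<in> E" "\<not> ab v" "b * c (u, v) - r (u, v) + N v \<le> 0"
  shows "\<not> ab u"
proof -
  have "ab u \<longleftrightarrow> (\<forall>w\<in>{w. (u, w) \<in> E \<and> \<not> ab w}. b * c (u, w) - r (u, w) + N w > 0)"
    using assms(1-3) unfolding valid_eval_i_def Let_def by blast
  then show ?thesis
    using assms(4-6) by force
qed

lemma valid_eval_i_no_abandonment:
  assumes "N t = 0"
    and "\<And>u. u \<in> V \<Longrightarrow> u \<noteq> t \<Longrightarrow> (u, nxt u) \<in> E"
    and "\<And>u. u \<in> V \<Longrightarrow> u \<noteq> t \<Longrightarrow> b * c (u, nxt u) - r (u, nxt u) + N (nxt u) \<le> 0"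
    and "\<And>u v. u \<in> V \<Longrightarrow> u \<noteq> t \<Longrightarrow> (u, v) \<in> E \<Longrightarrow>
           b * c (u, nxt u) - r (u, nxt u) + N (nxt u) \<le> b * c (u, v) - r (u, v) + N v"
    and "\<And>u. u \<in> V \<Longrightarrow> u \<noteq> t \<Longrightarrow> N u = c (u, nxt u) - r (u, nxt u) + N (nxt u)"
  shows "valid_eval_i V E c t b r (\<lambda>_. False) nxt N"
  unfolding valid_eval_i_def Let_def
proof (intro conjI ballI impI)
  fix u
  assume "u \<in> V" "u \<noteq> t"
  then show "False \<longleftrightarrow> {v. (u, v) \<in> E \<and> \<not> False} = {}
      \<or> (\<forall>v\<in>{v. (u, v) \<in> E \<and> \<not> False}. 0 < b * c (u, v) - r (u, v) + N v)"
    using assms(2,3) by force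
qed (use assms in auto)

definition reward_from :: "(nat \<times> nat) set \<Rightarrow> (nat \<times> nat \<Rightarrow> real) \<Rightarrow> nat \<Rightarrow> real" where
  "reward_from E r u = (\<Sum>e \<in> {e \<in> E. u \<le> fst e}. r e)"

lemma reward_from_edge:
  assumes "finite E" "\<forall>e\<in>E. 0 \<le> r e" "(u, v) \<in> E" "u < v"
  shows "r (u, v) + reward_from E r v \<le> reward_from E r u"
proof -
  have "r (u, v) + reward_from E r v = (\<Sum>e \<in> insert (u, v) {e \<in> E. v \<le> fst e}. r e)"
    using assms(1,4) by (simp add: reward_from_def)
  also have "\<dots> \<le> reward_from E r u"
    unfolding reward_from_def by (rule sum_mono2) (use assms in auto)
  finally show ?thesis .
qed

lemma reward_from_nonneg: "\<forall>e\<in>E. 0 \<le> r e \<Longrightarrow> 0 \<le> reward_from E r u"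
  unfolding reward_from_def by (rule sum_nonneg) auto

lemma reward_from_0: "reward_from E r 0 = (\<Sum>e\<in>E. r e)"
  unfolding reward_from_def by simp

locale gap_instance =
  fixes k :: nat
  assumes two_le_k: "2 \<le> k"
begin

text \<open>Nodes are numbered along the path: \<open>s = 0\<close>, hub \<open>w\<^sub>i = hub_at i\<close>, the chain
  after \<open>w\<^sub>i\<close> is \<open>hub_at i + j\<close> for \<open>0 < j < k\<^sup>2\<close>, \<open>w\<^sub>k = last_node\<close> and
  \<open>t = Suc last_node\<close>.\<close>

abbreviation hub_at :: "nat \<Rightarrow> nat" where
  "hub_at i \<equiv> i * (k * k) + 1"

definition last_node :: nat where
  "last_node = hub_at k"

definition hub :: "nat \<Rightarrow> bool" where
  "hub u \<longleftrightarrow> (\<exists>i<k. u = hub_at i)"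

definition nodes :: "nat set" where
  "nodes = {..Suc last_node}"

definition edges :: "(nat \<times> nat) set" where
  "edges = {(u, v). (u \<le> last_node \<and> v = Suc u) \<or> (hub u \<and> v = u + k * k)}"

definition shortcut_cost :: real where
  "shortcut_cost = (real k - 1) / real k"

definition chain_cost :: real where
  "chain_cost = 1 / (real k + 1)"

definition cost :: "nat \<times> nat \<Rightarrow> real" where
  "cost = (\<lambda>(u, v). if v = Suc u then
       (if u = 0 then shortcut_cost else if u = last_node then 1
        else if hub u then 0 else chain_cost)
     else shortcut_cost)"

lemma hub_bounds:
  assumes "hub u"
  shows "1 \<le> u" "u + k * k \<le> last_node" "u < last_node"
proof -
  obtain i where i: "i < k" "u = hub_at i"
    using assms hub_def by auto
  have "(i + 1) * (k * k) \<le> k * (k * k)"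
    using i(1) by (intro mult_le_mono1) simp
  then show "1 \<le> u" "u + k * k \<le> last_node" "u < last_node"
    using i by (auto simp: last_node_def)
qed

lemma hub_offset_iff:
  assumes "j < k * k"
  shows "hub (hub_at i + j) \<longleftrightarrow> j = 0 \<and> i < k"
proof
  assume "hub (hub_at i + j)"
  then obtain i' where "i' < k" "i * (k * k) + j = i' * (k * k)"
    by (auto simp: hub_def)
  moreover from this have "j = 0"
    using assms by (metis mod_mult_self3 mod_less mult.commute mod_mult_self1_is_0)
  ultimately show "j = 0 \<and> i < k"
    using assms by auto
qed (auto simp: hub_def)

lemma next_hub:
  assumes "hub u"
  shows "hub (u + k * k) \<or> u + k * k = last_node"
proof -
  obtain i where i: "i < k" "u = hub_at i"
    using assms hub_def by auto
  show ?thesis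
  proof (cases "Suc i < k")
    case True
    then show ?thesis
      unfolding hub_def by (intro disjI1 exI[of _ "Suc i"]) (simp add: i)
  next
    case False
    then have "Suc i = k"
      using i by simp
    then show ?thesis
      using i by (auto simp: last_node_def)
  qed
qed

lemma edges_iff:
  "(u, v) \<in> edges \<longleftrightarrow> (u \<le> last_node \<and> v = Suc u) \<or> (hub u \<and> v = u + k * k)"
  by (simp add: edges_def)

lemma edge_increasing: "(u, v) \<in> edges \<Longrightarrow> u < v \<and> v \<le> Suc last_node"
  using hub_bounds[of u] two_le_k by (auto simp: edges_iff)

lemma edge_below_last: "(u, v) \<in> edges \<Longrightarrow> u < last_node \<Longrightarrow> v \<le> last_node"
  using hub_bounds[of u] by (auto simp: edges_iff)

lemma edge_from_last: "(last_node, v) \<in> edges \<longleftrightarrow> v = Suc last_node"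
  using hub_bounds[of last_node] by (auto simp: edges_iff)

lemma edge_from_0: "(0, v) \<in> edges \<longleftrightarrow> v = 1"
  using hub_bounds(1)[of 0] by (auto simp: edges_iff)

lemma edges_subset_nodes: "edges \<subseteq> nodes \<times> nodes"
  using edge_increasing by (fastforce simp: nodes_def)

lemma finite_edges: "finite edges"
  using edges_subset_nodes by (rule finite_subset) (simp add: nodes_def)

lemma dag_instance_construction: "dag_instance nodes edges cost 0 (Suc last_node)"
  unfolding dag_instance_def
proof (intro conjI)
  show "acyclic edges"
    by (rule acyclic_if_increasing) (use edge_increasing in auto)
  show "\<forall>e\<in>edges. 0 \<le> cost e"
    using two_le_k by (auto simp: cost_def shortcut_cost_def chain_cost_def)
qed (use edges_subset_nodes hub_bounds(3)[of "Suc last_node"] in \<open>auto simp: nodes_def edges_iff\<close>)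

lemma hub_node:
  assumes "i < k"
  shows "hub (hub_at i)" "hub_at i + k * k \<le> last_node"
    and "(hub_at i, v) \<in> edges \<longleftrightarrow> v = hub_at i + 1 \<or> v = hub_at i + k * k"
    and "cost (hub_at i, hub_at i + 1) = 0"
    and "cost (hub_at i, hub_at i + k * k) = shortcut_cost"
proof -
  show hub: "hub (hub_at i)"
    using assms by (auto simp: hub_def)
  note bounds = hub_bounds[OF hub]
  show "hub_at i + k * k \<le> last_node"
    using bounds by simp
  show "(hub_at i, v) \<in> edges \<longleftrightarrow> v = hub_at i + 1 \<or> v = hub_at i + k * k"
    using hub bounds by (auto simp: edges_iff)
  show "cost (hub_at i, hub_at i + 1) = 0"
    using hub bounds by (simp add: cost_def)
  have "hub_at i + k * k \<noteq> Suc (hub_at i)"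
    using two_le_k by simp
  then show "cost (hub_at i, hub_at i + k * k) = shortcut_cost"
    by (simp add: cost_def)
qed

lemma chain_node:
  assumes "i < k" "1 \<le> j" "j < k * k"
  shows "\<not> hub (hub_at i + j)" "hub_at i + j < last_node"
    and "(hub_at i + j, v) \<in> edges \<longleftrightarrow> v = Suc (hub_at i + j)"
    and "cost (hub_at i + j, Suc (hub_at i + j)) = chain_cost"
proof -
  show not_hub: "\<not> hub (hub_at i + j)"
    using hub_offset_iff[OF assms(3)] assms(2) by simp
  have "(i + 1) * (k * k) \<le> k * (k * k)"
    using assms(1) by (intro mult_le_mono1) simp
  then show below: "hub_at i + j < last_node"
    using assms(3) by (simp add: last_node_def)
  show "(hub_at i + j, v) \<in> edges \<longleftrightarrow> v = Suc (hub_at i + j)"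
    using not_hub below by (auto simp: edges_iff)
  show "cost (hub_at i + j, Suc (hub_at i + j)) = chain_cost"
    using not_hub below by (simp add: cost_def)
qed

lemma node_decomp:
  assumes "1 \<le> u" "u \<le> last_node"
  obtains i j where "u = hub_at i + j" "j < k * k" "i < k \<or> (i = k \<and> j = 0)"
proof -
  define i where "i = (u - 1) div (k * k)"
  define j where "j = (u - 1) mod (k * k)"
  have "0 < k * k"
    using two_le_k by simp
  have "i * (k * k) + j = u - 1"
    unfolding i_def j_def by (rule div_mult_mod_eq)
  then have "u = hub_at i + j"
    using assms(1) by linarith
  moreover have "j < k * k"
    using \<open>0 < k * k\<close> by (simp add: j_def)
  moreover have "u - 1 \<le> k * (k * k)"
    using assms(2) by (simp add: last_node_def)
  then have "i \<le> k" "i = k \<Longrightarrow> j = 0"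
    using \<open>i * (k * k) + j = u - 1\<close> div_le_mono[of "u - 1" "k * (k * k)" "k * k"] \<open>0 < k * k\<close>
    by (auto simp: i_def)
  ultimately show ?thesis
    using that by (metis le_neq_implies_less)
qed

lemma shortcut_cost_bounds: "0 \<le> shortcut_cost" "shortcut_cost \<le> 1"
  using two_le_k by (auto simp: shortcut_cost_def)

lemma scaled_shortcut_cost:
  "real k * shortcut_cost = real k - 1"
  "real (k * k) * shortcut_cost = real (k * k) - real k"
  using two_le_k by (auto simp: shortcut_cost_def field_simps)

lemma chain_total_cost: "real (k * k - 1) * chain_cost = real k - 1"
proof -
  have "real (k * k - 1) = (real k - 1) * (real k + 1)"
    using two_le_k by (simp add: of_nat_diff algebra_simps)
  then show ?thesis
    by (simp add: chain_cost_def)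
qed

text \<open>The actual cost of walking all chains from \<open>w\<^sub>i\<close> to \<open>t\<close>.\<close>

definition route_cost :: "nat \<Rightarrow> real" where
  "route_cost i = real (k - i) * (real k - 1) + 1"

lemma route_cost_step: "i < k \<Longrightarrow> route_cost i = route_cost (Suc i) + (real k - 1)"
  by (simp add: route_cost_def of_nat_diff algebra_simps)

lemma route_cost_bound: "route_cost (Suc i) \<le> (real k - 1)\<^sup>2 + 1"
proof -
  have "real (k - Suc i) * (real k - 1) \<le> (real k - 1) * (real k - 1)"
    using two_le_k by (intro mult_right_mono) auto
  then show ?thesis
    by (simp add: route_cost_def power2_eq_square)
qed

lemma chain_forcing_bound:
  assumes "0 \<le> x" "x \<le> real (k * k) - 2"
  shows "real (k * k) * chain_cost + x * chain_cost + route_cost (Suc i) - real (k * k) \<le> 0"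
proof -
  have "0 < chain_cost"
    by (simp add: chain_cost_def)
  then have "(real (k * k) + x) * chain_cost \<le> (2 * real (k * k) - 2) * chain_cost"
    using assms by (intro mult_right_mono) auto
  then have "real (k * k) * chain_cost + x * chain_cost \<le> (2 * real (k * k) - 2) * chain_cost"
    by (simp add: algebra_simps)
  also have "\<dots> = 2 * (real (k * k - 1) * chain_cost)"
    using two_le_k by (simp add: of_nat_diff algebra_simps)
  also have "\<dots> = 2 * (real k - 1)"
    using chain_total_cost by simp
  finally show ?thesis
    using route_cost_bound[of i] by (simp add: power2_eq_square algebra_simps)
qed

definition del_edges :: "(nat \<times> nat) set" where
  "del_edges = {(u, v). (u = 0 \<and> v = 1) \<or> (hub u \<and> v = u + k * k)
     \<or> (u = last_node \<and> v = Suc last_node)}"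

definition del_abandoned :: "nat \<Rightarrow> bool" where
  "del_abandoned u \<longleftrightarrow> u \<noteq> 0 \<and> u \<noteq> last_node \<and> u \<noteq> Suc last_node \<and> \<not> hub u"

definition del_next :: "nat \<Rightarrow> nat" where
  "del_next u = (if u = 0 then 1 else if u = last_node then Suc last_node else u + k * k)"

definition del_cost :: "nat \<Rightarrow> real" where
  "del_cost u = (if u = 0 then shortcut_cost + real k * shortcut_cost + 1
     else if u = Suc last_node then 0
     else real (k - (u - 1) div (k * k)) * shortcut_cost + 1)"

lemma del_edges_subset: "del_edges \<subseteq> edges"
  using hub_bounds by (auto simp: del_edges_def edges_iff last_node_def)

lemma del_cost_hub:
  assumes "hub u"
  shows "real (k * k) * cost (u, u + k * k) + del_cost (u + k * k) \<le> real (k * k)"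
    and "del_cost u = cost (u, u + k * k) + del_cost (u + k * k)"
proof -
  obtain i where i: "i < k" "u = hub_at i"
    using assms hub_def by auto
  have "u + k * k \<noteq> Suc u"
    using two_le_k by simp
  then have c: "cost (u, u + k * k) = shortcut_cost"
    by (simp add: cost_def)
  have "(u + k * k - 1) div (k * k) = Suc i"
    using i two_le_k by simp
  moreover have "0 < u" "u + k * k \<noteq> Suc last_node"
    using hub_bounds[OF assms] by auto
  ultimately have next_cost: "del_cost (u + k * k) = real (k - Suc i) * shortcut_cost + 1"
    by (simp add: del_cost_def)
  have "real (k - Suc i) * shortcut_cost \<le> (real k - 1) * 1"
    using i shortcut_cost_bounds by (intro mult_mono) auto
  then show "real (k * k) * cost (u, u + k * k) + del_cost (u + k * k) \<le> real (k * k)"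
    using scaled_shortcut_cost(2) by (simp add: c next_cost)
  have "u \<noteq> 0" "u \<noteq> Suc last_node" "(u - 1) div (k * k) = i"
    using i hub_bounds[OF assms] by auto
  then have "del_cost u = real (k - i) * shortcut_cost + 1"
    by (simp add: del_cost_def)
  moreover have "real (k - i) = real (k - Suc i) + 1"
    using i by linarith
  ultimately show "del_cost u = cost (u, u + k * k) + del_cost (u + k * k)"
    by (simp add: c next_cost algebra_simps)
qed

lemma del_alive_cases:
  assumes "\<not> del_abandoned u" "u \<noteq> Suc last_node"
  obtains "u = 0" | "u = last_node" | "hub u" "u \<noteq> 0" "u \<noteq> last_node"
  using assms hub_bounds(1) by (force simp: del_abandoned_def)

lemma del_unique_choice:
  assumes "\<not> del_abandoned u" "u \<noteq> Suc last_node"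
  shows "{v. (u, v) \<in> del_edges \<and> \<not> del_abandoned v} = {del_next u}"
proof -
  have last: "0 < last_node" "\<not> hub last_node" "\<not> hub 0"
    using hub_bounds(1,3) by (fastforce simp: last_node_def)+
  from assms show ?thesis
  proof (cases rule: del_alive_cases)
    case 1
    have "hub 1"
      using two_le_k by (auto simp: hub_def)
    then show ?thesis
      using 1 last by (auto simp: del_edges_def del_abandoned_def del_next_def)
  next
    case 2
    then show ?thesis
      using last by (auto simp: del_edges_def del_abandoned_def del_next_def)
  next
    case 3
    then have "\<not> del_abandoned (u + k * k)"
      using next_hub by (auto simp: del_abandoned_def)
    then show ?thesis
      using 3 by (auto simp: del_edges_def del_next_def)
  qed
qed

lemma del_next_step:
  assumes "\<not> del_abandoned u" "u \<noteq> Suc last_node"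
  shows "real (k * k) * cost (u, del_next u) + del_cost (del_next u) \<le> real (k * k)"
    and "del_cost u = cost (u, del_next u) + del_cost (del_next u)"
proof -
  have last: "0 < last_node" "last_node \<noteq> 1" "(last_node - 1) div (k * k) = k"
    using two_le_k by (auto simp: last_node_def)
  have "hub 1"
    using two_le_k by (auto simp: hub_def)
  from assms have "real (k * k) * cost (u, del_next u) + del_cost (del_next u) \<le> real (k * k)
      \<and> del_cost u = cost (u, del_next u) + del_cost (del_next u)"
  proof (cases rule: del_alive_cases)
    case 1
    then show ?thesis
      using last \<open>hub 1\<close> scaled_shortcut_cost by (simp add: del_next_def cost_def del_cost_def)
  next
    case 2
    then show ?thesis
      using last by (simp add: del_next_def cost_def del_cost_def)
  next
    case 3
    then show ?thesis
      using del_cost_hub by (simp add: del_next_def)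
  qed
  then show "real (k * k) * cost (u, del_next u) + del_cost (del_next u) \<le> real (k * k)"
    and "del_cost u = cost (u, del_next u) + del_cost (del_next u)"
    by blast+
qed

lemma valid_eval_d_del_edges:
  "valid_eval_d nodes del_edges cost (Suc last_node) (real (k * k)) (real (k * k))
     del_abandoned del_next del_cost"
  unfolding valid_eval_d_def Let_def
proof (intro conjI ballI impI)
  fix u
  assume "u \<in> nodes" "u \<noteq> Suc last_node"
  let ?A = "{v. (u, v) \<in> del_edges \<and> \<not> del_abandoned v}"
  let ?P = "\<lambda>v. real (k * k) * cost (u, v) + del_cost v"
  show "del_abandoned u \<longleftrightarrow> ?A = {} \<or> (\<forall>v\<in>?A. real (k * k) < ?P v)"
  proof (cases "del_abandoned u")
    case True
    then show ?thesis
      by (auto simp: del_edges_def del_abandoned_def)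
  next
    case False
    then show ?thesis
      using del_unique_choice del_next_step(1) \<open>u \<noteq> Suc last_node\<close> by fastforce
  qed
  show "\<not> del_abandoned u \<Longrightarrow> del_next u \<in> ?A"
    and "\<And>v. \<not> del_abandoned u \<Longrightarrow> v \<in> ?A \<Longrightarrow> ?P (del_next u) \<le> ?P v"
    and "\<not> del_abandoned u \<Longrightarrow> del_cost u = cost (u, del_next u) + del_cost (del_next u)"
    using del_unique_choice del_next_step(2) \<open>u \<noteq> Suc last_node\<close> by auto
qed (simp_all add: del_abandoned_def del_cost_def)

lemma last_node_not_abandoned_d:
  assumes "H \<subseteq> edges"
    and eval: "valid_eval_d nodes H cost (Suc last_node) b R ab nxt C"
    and "u \<le> last_node" "\<not> ab u"
  shows "\<not> ab last_node"
  using assms(3,4)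
proof (induction "last_node - u" arbitrary: u rule: less_induct)
  case less
  show ?case
  proof (cases "u = last_node")
    case False
    have "u \<in> nodes" "u \<noteq> Suc last_node"
      using less.prems(1) by (auto simp: nodes_def)
    note step = valid_eval_d_step[OF eval this less.prems(2)]
    have e: "(u, nxt u) \<in> edges"
      using step(1) assms(1) by blast
    then have "u < nxt u" "nxt u \<le> last_node"
      using edge_increasing edge_below_last less.prems(1) False by auto
    then show ?thesis
      using less.hyps[of "nxt u"] step(2) by simp
  qed (use less.prems in simp)
qed

lemma reward_d_lower_bound:
  assumes "H \<subseteq> edges"
    and eval: "valid_eval_d nodes H cost (Suc last_node) b R ab nxt C"
    and "\<not> ab 0"
  shows "b \<le> R"
proof -
  have alive: "\<not> ab last_node"
    using last_node_not_abandoned_d[OF assms(1,2) _ assms(3)] by simp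
  have "last_node \<in> nodes"
    by (simp add: nodes_def)
  note step = valid_eval_d_step[OF eval this n_not_Suc_n alive]
  have "(last_node, nxt last_node) \<in> edges"
    using step(1) assms(1) by blast
  then have "nxt last_node = Suc last_node"
    by (simp add: edge_from_last)
  moreover have "C (Suc last_node) = 0"
    using eval by (simp add: valid_eval_d_def)
  moreover have "cost (last_node, Suc last_node) = 1"
    by (simp add: cost_def last_node_def)
  ultimately show ?thesis
    using step(3) by simp
qed

lemma is_min_feasible_d:
  "is_min (feasible_d nodes edges cost 0 (Suc last_node) (real (k * k)))
           (real (k * k))"
  unfolding is_min_def feasible_d_def
proof (intro conjI ballI CollectI)
  have "reaches_d nodes del_edges cost 0 (Suc last_node) (real (k * k)) (real (k * k))"
    unfolding reaches_d_def
    using valid_eval_d_del_edges del_abandoned_def[of 0] by auto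
  then show "\<exists>H \<subseteq> edges. reaches_d nodes H cost 0 (Suc last_node) (real (k * k)) (real (k * k))"
    using del_edges_subset by blast
next
  fix y
  assume "y \<in> {R. 0 \<le> R \<and> (\<exists>H \<subseteq> edges. reaches_d nodes H cost 0 (Suc last_node) (real (k * k)) R)}"
  then show "real (k * k) \<le> y"
    unfolding reaches_d_def using reward_d_lower_bound by blast
qed simp

text \<open>The induction hypothesis over the hubs, for the net cost \<open>n = N(w\<^sub>i)\<close> and the rewards
  \<open>T\<close> on edges leaving nodes \<open>\<ge> w\<^sub>i\<close>: either \<open>T\<close> is already as large as claimed, or
  \<open>n + T\<close>, the actual cost still to be paid, covers the full chain route.\<close>

definition hub_estimate :: "nat \<Rightarrow> real \<Rightarrow> real \<Rightarrow> bool" where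
  "hub_estimate i n T \<longleftrightarrow> n \<le> route_cost i - real (k * k)
     \<and> (real (k * k) + (real k - 1)\<^sup>2 \<le> T \<or> route_cost i \<le> n + T)"

lemma hub_estimate_reward: "hub_estimate i n T \<Longrightarrow> real (k * k) \<le> T"
  unfolding hub_estimate_def by (smt (verit) zero_le_power2)

context
  fixes r :: "nat \<times> nat \<Rightarrow> real" and ab :: "nat \<Rightarrow> bool"
    and nxt :: "nat \<Rightarrow> nat" and N :: "nat \<Rightarrow> real"
  assumes eval: "valid_eval_i nodes edges cost (Suc last_node) (real (k * k)) r ab nxt N"
    and nonneg: "\<forall>e\<in>edges. 0 \<le> r e"
begin

abbreviation later_reward :: "nat \<Rightarrow> real" where
  "later_reward \<equiv> reward_from edges r"

lemma agent_step:
  assumes "u \<le> last_node" "\<not> ab u"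
  shows "(u, nxt u) \<in> edges" "\<not> ab (nxt u)"
    and "real (k * k) * cost (u, nxt u) - r (u, nxt u) + N (nxt u) \<le> 0"
    and "N u = cost (u, nxt u) - r (u, nxt u) + N (nxt u)"
    and "\<And>v. (u, v) \<in> edges \<Longrightarrow> \<not> ab v \<Longrightarrow> real (k * k) * cost (u, nxt u) - r (u, nxt u) + N (nxt u)
           \<le> real (k * k) * cost (u, v) - r (u, v) + N v"
  using valid_eval_i_step[OF eval _ _ assms(2)] assms(1) by (auto simp: nodes_def)

lemma agent_not_abandoned:
  assumes "u \<le> last_node" "(u, v) \<in> edges" "\<not> ab v"
    and "real (k * k) * cost (u, v) - r (u, v) + N v \<le> 0"
  shows "\<not> ab u"
  using valid_eval_i_not_abandoned[OF eval _ _ assms(2-4)] assms(1) by (auto simp: nodes_def)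

lemma later_reward_edge: "(u, v) \<in> edges \<Longrightarrow> r (u, v) + later_reward v \<le> later_reward u"
  using reward_from_edge[OF finite_edges nonneg] edge_increasing by blast

lemma chain_walk:
  assumes "i < k" "1 \<le> j" "j \<le> k * k" "\<not> ab (hub_at i + j)"
  shows "\<not> ab (hub_at i + k * k)"
    and "N (hub_at i + j) \<le> real (k * k - j) * chain_cost + N (hub_at i + k * k)"
    and "N (hub_at i + k * k) + real (k * k - j) * chain_cost + later_reward (hub_at i + k * k)
           \<le> N (hub_at i + j) + later_reward (hub_at i + j)"
  using assms(3,2,4) unfolding atomize_conj
proof (induction j rule: inc_induct)
  case (step j)
  let ?u = "hub_at i + j"
  note node = chain_node[OF assms(1) step.prems(1) step.hyps(2)]
  note walk = agent_step[OF less_imp_le[OF node(2)] step.prems(2)]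
  have "nxt ?u = Suc ?u"
    using walk(1) node(3) by blast
  then have N_u: "N ?u = chain_cost - r (?u, Suc ?u) + N (Suc ?u)" and "\<not> ab (Suc ?u)"
    using walk(2,4) node(4) by auto
  then have IH: "\<not> ab (hub_at i + k * k)"
      "N (Suc ?u) \<le> real (k * k - Suc j) * chain_cost + N (hub_at i + k * k)"
      "N (hub_at i + k * k) + real (k * k - Suc j) * chain_cost
         + later_reward (hub_at i + k * k) \<le> N (Suc ?u) + later_reward (Suc ?u)"
    using step.IH by simp_all
  have "0 \<le> r (?u, Suc ?u)" "r (?u, Suc ?u) + later_reward (Suc ?u) \<le> later_reward ?u"
    using nonneg later_reward_edge node(3) by blast+
  moreover have "real (k * k - j) = real (k * k - Suc j) + 1"
    using step.hyps(2) by linarith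
  ultimately show ?case
    using IH N_u by (simp add: algebra_simps)
qed simp

lemma chain_not_abandoned:
  assumes "i < k" "1 \<le> j" "j \<le> k * k"
    and "\<not> ab (hub_at i + k * k)"
    and "N (hub_at i + k * k) \<le> route_cost (Suc i) - real (k * k)"
  shows "\<not> ab (hub_at i + j)"
  using assms(3,2)
proof (induction j rule: inc_induct)
  case (step j)
  let ?u = "hub_at i + j"
  note node = chain_node[OF assms(1) step.prems step.hyps(2)]
  have alive: "\<not> ab (Suc ?u)"
    using step.IH by simp
  have "N (Suc ?u) \<le> real (k * k - Suc j) * chain_cost + N (hub_at i + k * k)"
    using chain_walk(2)[OF assms(1), of "Suc j"] step.hyps(2) alive by simp
  moreover have "0 \<le> r (?u, Suc ?u)"
    using nonneg node(3) by blast
  moreover have "real (k * k - Suc j) \<le> real (k * k) - 2"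
    using step.prems step.hyps(2) by (simp add: of_nat_diff)
  ultimately have "real (k * k) * cost (?u, Suc ?u) - r (?u, Suc ?u) + N (Suc ?u) \<le> 0"
    using chain_forcing_bound[OF _ \<open>real (k * k - Suc j) \<le> _\<close>, of i] assms(5) node(4) by simp
  then show ?case
    using agent_not_abandoned[OF less_imp_le[OF node(2)]] node(3) alive by blast
qed (use assms(4) in simp)

lemma hub_estimate_last:
  assumes "\<not> ab last_node"
  shows "hub_estimate k (N last_node) (later_reward last_node)"
proof -
  let ?z = "last_node"
  note walk = agent_step[OF order_refl assms]
  have nxt: "nxt ?z = Suc ?z"
    using walk(1) edge_from_last by blast
  have "N (Suc ?z) = 0" "cost (?z, Suc ?z) = 1"
    using eval by (simp_all add: valid_eval_i_def cost_def last_node_def)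
  then have "real (k * k) \<le> r (?z, Suc ?z)" "N ?z = 1 - r (?z, Suc ?z)"
    using walk(3,4) nxt by simp_all
  moreover have "r (?z, Suc ?z) \<le> later_reward ?z"
    using later_reward_edge[of ?z "Suc ?z"] reward_from_nonneg[OF nonneg, of "Suc ?z"]
    by (simp add: edges_iff)
  ultimately show ?thesis
    by (simp add: hub_estimate_def route_cost_def)
qed

lemma hub_estimate_shortcut:
  assumes "i < k" "\<not> ab (hub_at i)" "nxt (hub_at i) = hub_at i + k * k"
    and next_hub: "\<not> ab (hub_at i + k * k) \<Longrightarrow>
      hub_estimate (Suc i) (N (hub_at i + k * k)) (later_reward (hub_at i + k * k))"
  shows "hub_estimate i (N (hub_at i)) (later_reward (hub_at i))"
proof -
  let ?w = "hub_at i" and ?w' = "hub_at i + k * k" and ?m = "hub_at i + 1"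
  note node = hub_node[OF assms(1)]
  note walk = agent_step[OF less_imp_le[OF hub_bounds(3)[OF node(1)]] assms(2)]
  have alive: "\<not> ab ?w'"
    using walk(2) assms(3) by simp
  with next_hub have est: "hub_estimate (Suc i) (N ?w') (later_reward ?w')"
    by blast
  then have "\<not> ab ?m"
    using chain_not_abandoned[OF assms(1), of 1] alive two_le_k by (simp add: hub_estimate_def)
  then have "N ?m \<le> (real k - 1) + N ?w'"
    using chain_walk(2)[OF assms(1), of 1] chain_total_cost two_le_k by simp
  \<comment> \<open>the chain is open, so the shortcut must beat it; this forces a reward of \<open>(k-1)\<^sup>2\<close>\<close>
  moreover have "real (k * k) * shortcut_cost - r (?w, ?w') + N ?w' \<le> - r (?w, ?m) + N ?m"
    using walk(5)[of ?m] \<open>\<not> ab ?m\<close> assms(3) node(3-5) by simp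
  moreover have "0 \<le> r (?w, ?m)"
    using nonneg node(3) by blast
  ultimately have "(real k - 1)\<^sup>2 \<le> r (?w, ?w')"
    using scaled_shortcut_cost(2) by (simp add: power2_eq_square algebra_simps)
  moreover have "r (?w, ?w') + later_reward ?w' \<le> later_reward ?w"
    using later_reward_edge node(3) by blast
  moreover have "N ?w = shortcut_cost - r (?w, ?w') + N ?w'"
    using walk(4) assms(3) node(5) by simp
  moreover have "shortcut_cost \<le> 1" "1 \<le> real k - 1"
    using shortcut_cost_bounds two_le_k by auto
  ultimately show ?thesis
    using est hub_estimate_reward[OF est] route_cost_step[OF assms(1)]
    unfolding hub_estimate_def by (smt (verit) zero_le_power2)
qed

lemma hub_estimate_chain:
  assumes "i < k" "\<not> ab (hub_at i)" "nxt (hub_at i) = hub_at i + 1"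
    and next_hub: "\<not> ab (hub_at i + k * k) \<Longrightarrow>
      hub_estimate (Suc i) (N (hub_at i + k * k)) (later_reward (hub_at i + k * k))"
  shows "hub_estimate i (N (hub_at i)) (later_reward (hub_at i))"
proof -
  let ?w = "hub_at i" and ?w' = "hub_at i + k * k" and ?m = "hub_at i + 1"
  note node = hub_node[OF assms(1)]
  note walk = agent_step[OF less_imp_le[OF hub_bounds(3)[OF node(1)]] assms(2)]
  have "\<not> ab ?m"
    using walk(2) assms(3) by simp
  then have alive: "\<not> ab ?w'" and "N ?m \<le> (real k - 1) + N ?w'"
    and "N ?w' + (real k - 1) + later_reward ?w' \<le> N ?m + later_reward ?m"
    using chain_walk[OF assms(1), of 1] chain_total_cost two_le_k by simp_all
  moreover have "N ?w = - r (?w, ?m) + N ?m"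
    using walk(4) assms(3) node(4) by simp
  moreover have "0 \<le> r (?w, ?m)" "r (?w, ?m) + later_reward ?m \<le> later_reward ?w"
    using nonneg later_reward_edge node(3) by blast+
  moreover have "hub_estimate (Suc i) (N ?w') (later_reward ?w')"
    using next_hub alive by blast
  ultimately show ?thesis
    using route_cost_step[OF assms(1)] unfolding hub_estimate_def by linarith
qed

lemma hub_estimate_holds:
  assumes "i \<le> k" "\<not> ab (hub_at i)"
  shows "hub_estimate i (N (hub_at i)) (later_reward (hub_at i))"
  using assms
proof (induction i rule: inc_induct)
  case base
  then show ?case
    using hub_estimate_last by (simp add: last_node_def)
next
  case (step i)
  have "nxt (hub_at i) = hub_at i + 1 \<or> nxt (hub_at i) = hub_at i + k * k"
    using agent_step(1)[OF _ step.prems] hub_node[OF step.hyps(2)] by (simp add: hub_bounds)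
  moreover have "\<not> ab (hub_at i + k * k) \<Longrightarrow>
      hub_estimate (Suc i) (N (hub_at i + k * k)) (later_reward (hub_at i + k * k))"
    using step.IH by (simp add: algebra_simps)
  ultimately show ?case
    using hub_estimate_chain hub_estimate_shortcut step.hyps(2) step.prems by blast
qed

lemma internal_reward_lower_bound:
  assumes "\<not> ab 0"
  shows "real (k * k) + (real k - 1)\<^sup>2 \<le> (\<Sum>e\<in>edges. r e)"
proof -
  note walk = agent_step[OF le0 assms]
  have nxt: "nxt 0 = 1"
    using walk(1) edge_from_0 by blast
  then have "\<not> ab 1" "real (k * k) * shortcut_cost - r (0, 1) + N 1 \<le> 0"
    using walk(2,3) by (simp_all add: cost_def)
  moreover have "hub_estimate 0 (N 1) (later_reward 1)"
    using hub_estimate_holds[of 0] \<open>\<not> ab 1\<close> by simp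
  moreover have "r (0, 1) + later_reward 1 \<le> later_reward 0" "0 \<le> r (0, 1)"
    using later_reward_edge[of 0 1] nonneg by (simp_all add: edge_from_0)
  ultimately have "real (k * k) + (real k - 1)\<^sup>2 \<le> later_reward 0"
    using scaled_shortcut_cost(2)
    unfolding hub_estimate_def route_cost_def by (auto simp: power2_eq_square algebra_simps)
  then show ?thesis
    by (simp add: reward_from_0)
qed

end

definition int_reward :: "nat \<times> nat \<Rightarrow> real" where
  "int_reward e = (if e = (last_node, Suc last_node) then real (k * k) else 0)
     + (if e = (0, 1) then (real k - 1)\<^sup>2 else 0)"

definition int_net :: "nat \<Rightarrow> real" where
  "int_net u = (if u = 0 then shortcut_cost - (real k - 1)\<^sup>2 + route_cost 0 - real (k * k)
     else if u = Suc last_node then 0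
     else if (u - 1) mod (k * k) = 0 then route_cost ((u - 1) div (k * k)) - real (k * k)
     else real (k * k - (u - 1) mod (k * k)) * chain_cost
       + route_cost (Suc ((u - 1) div (k * k))) - real (k * k))"

lemma int_reward_inner: "u \<noteq> 0 \<Longrightarrow> u \<noteq> last_node \<Longrightarrow> int_reward (u, v) = 0"
  by (simp add: int_reward_def)

lemma sum_int_reward: "(\<Sum>e\<in>edges. int_reward e) = real (k * k) + (real k - 1)\<^sup>2"
proof -
  have "(last_node, Suc last_node) \<in> edges" "(0, 1) \<in> edges"
    by (simp_all add: edges_iff)
  then show ?thesis
    unfolding int_reward_def sum.distrib using finite_edges by (simp only: sum.delta if_True)
qed

lemma int_net_hub:
  assumes "i \<le> k"
  shows "int_net (hub_at i) = route_cost i - real (k * k)"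
proof -
  have "i * (k * k) \<le> k * (k * k)"
    using assms by (rule mult_le_mono1)
  then have "hub_at i \<noteq> Suc last_node"
    unfolding last_node_def by linarith
  then show ?thesis
    using two_le_k by (simp add: int_net_def)
qed

lemma int_net_chain:
  assumes "i < k" "1 \<le> j" "j \<le> k * k"
  shows "int_net (hub_at i + j) = real (k * k - j) * chain_cost + route_cost (Suc i) - real (k * k)"
proof (cases "j = k * k")
  case True
  then show ?thesis
    using int_net_hub[of "Suc i"] assms(1) by (simp add: algebra_simps)
next
  case False
  moreover have "hub_at i + j \<noteq> Suc last_node"
    using chain_node(2)[OF assms(1,2)] False assms(3) by simp
  ultimately show ?thesis
    using assms by (simp add: int_net_def)
qed

abbreviation int_priority :: "nat \<Rightarrow> nat \<Rightarrow> real" where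
  "int_priority u v \<equiv> real (k * k) * cost (u, v) - int_reward (u, v) + int_net v"

abbreviation int_balanced :: "nat \<Rightarrow> bool" where
  "int_balanced u \<equiv> int_net u = cost (u, Suc u) - int_reward (u, Suc u) + int_net (Suc u)"

lemma int_step_start: "int_priority 0 1 = 0" "int_balanced 0"
proof -
  have "int_net 1 = route_cost 0 - real (k * k)"
    using int_net_hub[of 0] by simp
  moreover have "int_reward (0, 1) = (real k - 1)\<^sup>2"
    by (simp add: int_reward_def last_node_def)
  ultimately show "int_priority 0 1 = 0" "int_balanced 0"
    using scaled_shortcut_cost
    by (simp_all add: cost_def int_net_def route_cost_def power2_eq_square algebra_simps)
qed

lemma int_step_last: "int_priority last_node (Suc last_node) = 0" "int_balanced last_node"
  using int_net_hub[of k] by (simp_all add: cost_def int_reward_def int_net_def last_node_def route_cost_def)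

lemma int_step_hub:
  assumes "i < k"
  shows "int_priority (hub_at i) (hub_at i + 1) \<le> 0"
    and "int_priority (hub_at i) (hub_at i + 1)
           \<le> int_priority (hub_at i) (hub_at i + k * k)"
    and "int_balanced (hub_at i)"
proof -
  let ?w = "hub_at i"
  note node = hub_node[OF assms]
  have "int_reward (?w, v) = 0" for v
    using hub_bounds[OF node(1)] by (simp add: int_reward_inner)
  moreover have "int_net (?w + 1) = (real k - 1) + route_cost (Suc i) - real (k * k)"
    using int_net_chain[of i 1] assms two_le_k chain_total_cost by simp
  moreover have "int_net (?w + k * k) = route_cost (Suc i) - real (k * k)"
    using int_net_hub[of "Suc i"] assms by (simp add: algebra_simps)
  moreover have "int_net ?w = route_cost i - real (k * k)"
    using int_net_hub[of i] assms by simp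
  moreover have "real (k - i) * (real k - 1) \<le> real k * (real k - 1)"
    using two_le_k by (intro mult_right_mono) auto
  then have "route_cost i \<le> real (k * k)"
    using two_le_k by (simp add: route_cost_def algebra_simps)
  moreover have "real k * 2 \<le> real k * real k"
    using two_le_k by (intro mult_left_mono) auto
  then have "real k - 1 \<le> real (k * k) - real k"
    by simp
  ultimately show "int_priority ?w (?w + 1) \<le> 0" "int_priority ?w (?w + 1) \<le> int_priority ?w (?w + k * k)"
    "int_balanced ?w"
    using node(4,5) scaled_shortcut_cost(2) route_cost_step[OF assms] by simp_all
qed

lemma int_step_chain:
  assumes "i < k" "1 \<le> j" "j < k * k"
  shows "int_priority (hub_at i + j) (Suc (hub_at i + j)) \<le> 0"
    and "int_balanced (hub_at i + j)"
proof -
  let ?u = "hub_at i + j"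
  note node = chain_node[OF assms]
  have "int_reward (?u, Suc ?u) = 0"
    using node(2) by (simp add: int_reward_inner)
  moreover have next_net: "int_net (Suc ?u)
      = real (k * k - Suc j) * chain_cost + route_cost (Suc i) - real (k * k)"
    using int_net_chain[of i "Suc j"] assms by simp
  ultimately have "int_priority ?u (Suc ?u)
      = real (k * k) * chain_cost + real (k * k - Suc j) * chain_cost + route_cost (Suc i) - real (k * k)"
    using node(4) by simp
  moreover have "real (k * k - Suc j) \<le> real (k * k) - 2"
    using assms by (simp add: of_nat_diff)
  ultimately show "int_priority ?u (Suc ?u) \<le> 0"
    using chain_forcing_bound[of "real (k * k - Suc j)" i] by simp
  have "real (k * k - j) = real (k * k - Suc j) + 1"
    using assms by (simp add: of_nat_diff)
  then show "int_balanced ?u"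
    using int_net_chain[of i j] assms node(4) next_net \<open>int_reward (?u, Suc ?u) = 0\<close>
    by (simp add: algebra_simps)
qed

lemma int_step:
  assumes "u \<le> last_node"
  shows "int_priority u (Suc u) \<le> 0 \<and> (\<forall>v. (u, v) \<in> edges \<longrightarrow> int_priority u (Suc u) \<le> int_priority u v)
    \<and> int_balanced u"
proof (cases "u = 0")
  case True
  then show ?thesis
    using int_step_start edge_from_0 by auto
next
  case False
  then obtain i j where u: "u = hub_at i + j" "j < k * k" "i < k \<or> (i = k \<and> j = 0)"
    using node_decomp assms by (metis One_nat_def Suc_leI neq0_conv)
  consider "i = k" "j = 0" | "i < k" "j = 0" | "i < k" "1 \<le> j"
    using u(3) by linarith
  then show ?thesis
  proof cases
    case 1
    then have "u = last_node"
      using u(1) by (simp add: last_node_def)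
    then show ?thesis
      using int_step_last edge_from_last by auto
  next
    case 2
    then show ?thesis
      using int_step_hub[OF 2(1)] hub_node(3)[OF 2(1)] u(1) by auto
  next
    case 3
    then show ?thesis
      using int_step_chain[OF 3 u(2)] chain_node(3)[OF 3 u(2)] u(1) by auto
  qed
qed

lemma valid_eval_i_int_reward:
  "valid_eval_i nodes edges cost (Suc last_node) (real (k * k)) int_reward
     (\<lambda>_. False) Suc int_net"
proof (rule valid_eval_i_no_abandonment)
  fix u
  assume "u \<in> nodes" "u \<noteq> Suc last_node"
  then have "u \<le> last_node"
    by (auto simp: nodes_def)
  then show "(u, Suc u) \<in> edges" and "int_priority u (Suc u) \<le> 0"
    and "\<And>v. (u, v) \<in> edges \<Longrightarrow> int_priority u (Suc u) \<le> int_priority u v" and "int_balanced u"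
    using int_step by (auto simp: edges_iff)
qed (simp add: int_net_def)

lemma is_min_feasible_i:
  "is_min (feasible_i nodes edges cost 0 (Suc last_node) (real (k * k)))
           (real (k * k) + (real k - 1)\<^sup>2)"
  unfolding is_min_def feasible_i_def
proof (intro conjI ballI)
  have "\<forall>e\<in>edges. 0 \<le> int_reward e"
    by (simp add: int_reward_def)
  moreover have "reaches_i nodes edges cost 0 (Suc last_node) (real (k * k)) int_reward"
    unfolding reaches_i_def using valid_eval_i_int_reward by blast
  ultimately show "real (k * k) + (real k - 1)\<^sup>2 \<in> {\<Sum>e\<in>edges. r e | r. (\<forall>e\<in>edges. 0 \<le> r e)
      \<and> reaches_i nodes edges cost 0 (Suc last_node) (real (k * k)) r}"
    using sum_int_reward by (auto intro!: exI[of _ "int_reward"])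
next
  fix y
  assume "y \<in> {\<Sum>e\<in>edges. r e | r. (\<forall>e\<in>edges. 0 \<le> r e)
      \<and> reaches_i nodes edges cost 0 (Suc last_node) (real (k * k)) r}"
  then obtain r ab nxt N where "y = (\<Sum>e\<in>edges. r e)" "\<forall>e\<in>edges. 0 \<le> r e" "\<not> ab 0"
    "valid_eval_i nodes edges cost (Suc last_node) (real (k * k)) r ab nxt N"
    unfolding reaches_i_def by blast
  then show "real (k * k) + (real k - 1)\<^sup>2 \<le> y"
    using internal_reward_lower_bound by blast
qed

end

lemma ratio_bound:
  fixes \<epsilon> :: real
  assumes "0 < \<epsilon>" "2 / \<epsilon> \<le> real k"
  shows "(2 - \<epsilon>) * real (k * k) \<le> real (k * k) + (real k - 1)\<^sup>2"
proof -
  have "2 \<le> \<epsilon> * real k"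
    using assms by (simp add: field_simps)
  then have "2 * real k \<le> \<epsilon> * real k * real k"
    by (intro mult_right_mono) auto
  then show ?thesis
    by (simp add: power2_eq_square algebra_simps)
qed

theorem theorem4:
  fixes \<epsilon> :: real
  assumes "\<epsilon> > 0"
  shows "\<exists>b::real. b > 1 \<and>
           (\<exists>V E c s t Rd Ri. dag_instance V E c s t
              \<and> is_min (feasible_d V E c s t b) Rd
              \<and> is_min (feasible_i V E c s t b) Ri
              \<and> Rd > 0
              \<and> Ri \<ge> (2 - \<epsilon>) * Rd)"
proof -
  define k where "k = max 2 (nat \<lceil>2 / \<epsilon>\<rceil>)"
  have k: "2 \<le> k"
    by (simp add: k_def)
  interpret gap_instance k
    using k by unfold_locales
  have "2 / \<epsilon> \<le> real (nat \<lceil>2 / \<epsilon>\<rceil>)" "nat \<lceil>2 / \<epsilon>\<rceil> \<le> k"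
    by (simp_all add: real_nat_ceiling_ge k_def)
  then have "(2 - \<epsilon>) * real (k * k) \<le> real (k * k) + (real k - 1)\<^sup>2"
    using ratio_bound[OF assms, of k] by linarith
  moreover have "1 < real (k * k)"
    using mult_le_mono[OF k k] by (simp flip: of_nat_mult)
  ultimately show ?thesis
    using dag_instance_construction is_min_feasible_d is_min_feasible_i
    by (intro exI[of _ "real (k * k)"] conjI; fastforce)
qed

end
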